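(* Let $G$ be a finite group and $n\ge1$, and let $a_1,\dots,a_{2n}$ be independent uniformly random elements of $G$. Then \[ Pr(a_{2n}a_{2n-1}\cdots a_1=a_1a_2\cdots a_{2n})=\frac{\sum_{x_1,\dots,x_n\in G}|Stab.Prod_n(x_1,\dots,x_n)|}{|G|^{2n}} \] and \[ Pr(a_{2n}a_{2n-1}\cdots a_1=a_1a_2\cdots a_{2n})=\sum_{i_1,\dots,i_n,j=1}^{c(G)}\frac{|\Omega_j|\cdot c_{i_1,\dots,i_n;j}(G)^2}{|\Omega_{i_1}|\cdots|\Omega_{i_n}|\cdot|G|^n}. \]
   Context: $c(G)$ is the number of conjugacy classes of $G$, and $\Omega_1,\dots,\Omega_{c(G)}$ are these classes. For $g_1,\dots,g_n\in G$, $Stab.Prod_n(g_1,\dots,g_n)$ is the set of all tuples $(b_1,\dots,b_n)\in G^n$ with $b_1^{-1}g_1b_1\cdot b_2^{-1}g_2b_2\cdots b_n^{-1}g_nb_n=g_1g_2\cdots g_n$. $c_{i_1,\dots,i_n;j}(G)$ is the number of tuples $(x_1,\dots,x_n)$ with $x_t\in\Omega_{i_t}$ for all $t$ and $x_1x_2\cdots x_n=y$, for a fixed $y\in\Omega_j$. This number is independent of the choice of $y$. *)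

theory Defs
  imports Complex_Main "HOL-Algebra.Group"
begin

definition gprod :: "('a, 'b) monoid_scheme \<Rightarrow> 'a list \<Rightarrow> 'a" where
  "gprod G xs = foldr (\<lambda>x y. x \<otimes>\<^bsub>G\<^esub> y) xs \<one>\<^bsub>G\<^esub>"

definition tuples :: "('a, 'b) monoid_scheme \<Rightarrow> nat \<Rightarrow> 'a list set" where
  "tuples G m = {xs. length xs = m \<and> set xs \<subseteq> carrier G}"

definition stab_prod :: "('a, 'b) monoid_scheme \<Rightarrow> 'a list \<Rightarrow> 'a list set" where
  "stab_prod G gs = {bs \<in> tuples G (length gs).
     gprod G (map2 (\<lambda>b g. inv\<^bsub>G\<^esub> b \<otimes>\<^bsub>G\<^esub> g \<otimes>\<^bsub>G\<^esub> b) bs gs) = gprod G gs}"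

definition conj_class :: "('a, 'b) monoid_scheme \<Rightarrow> 'a \<Rightarrow> 'a set" where
  "conj_class G x = {inv\<^bsub>G\<^esub> g \<otimes>\<^bsub>G\<^esub> x \<otimes>\<^bsub>G\<^esub> g | g. g \<in> carrier G}"

definition conj_classes :: "('a, 'b) monoid_scheme \<Rightarrow> 'a set set" where
  "conj_classes G = conj_class G ` carrier G"

definition class_mult :: "('a, 'b) monoid_scheme \<Rightarrow> 'a set list \<Rightarrow> 'a set \<Rightarrow> nat" where
  "class_mult G Cs Om = card {xs. length xs = length Cs \<and> (\<forall>t<length Cs. xs ! t \<in> Cs ! t)
      \<and> gprod G xs = (SOME y. y \<in> Om)}"

end

theory Submission
  imports Defs
begin

text \<open>
  Reading a word a_1 ... a_2n in pairs, y_i = a_(2i-1) a_2i and u_i = a_(2i-1), is a bijection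
  G^2n -> G^n x G^n under which a_1 ... a_2n = y_1 ... y_n, while the reversed word multiplies to
  (u_n^-1 y_n u_n) ... (u_1^-1 y_1 u_1). So for fixed y the admissible u are those of
  Stab.Prod_n(y), except that the conjugates are multiplied in the opposite order. The order does
  not matter: either way the number of u is the product of the centralizer orders |C(y_i)| times the
  number of ways of writing y_1 ... y_n as a product of elements of the classes of the y_i, and this
  number is a class function of the product, hence unchanged when the last factor is moved to the
  front. Grouping the y by their classes, |C(y_i)| = |G| / |class of y_i|, and the remaining sum over
  y becomes a sum of squares of these counts, which are the c_(i_1,...,i_n;j)(G).
\<close>

lemma gprod_Nil [simp]: "gprod G [] = \<one>\<^bsub>G\<^esub>"
  by (simp add: gprod_def)

lemma gprod_Cons [simp]: "gprod G (x # xs) = x \<otimes>\<^bsub>G\<^esub> gprod G xs"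
  by (simp add: gprod_def)

lemma listset_iff_list_all2: "ws \<in> listset As \<longleftrightarrow> list_all2 (\<in>) ws As"
  by (induction As arbitrary: ws) (auto simp: set_Cons_def list_all2_Cons2)

lemma listset_Cons_eq_image: "listset (A # As) = (\<lambda>(a, ws). a # ws) ` (A \<times> listset As)"
  by (auto simp: set_Cons_def)

lemma finite_listset: "(\<And>A. A \<in> set As \<Longrightarrow> finite A) \<Longrightarrow> finite (listset As)"
  by (induction As) (auto simp: listset_Cons_eq_image simp del: listset.simps(2))

lemma sum_listset_Cons:
  "(\<Sum>ws\<in>listset (A # As). f ws) = (\<Sum>a\<in>A. \<Sum>ws\<in>listset As. f (a # ws))"
proof -
  have "inj_on (\<lambda>(a, ws). a # ws) (A \<times> listset As)"
    by (auto simp: inj_on_def)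
  then have "(\<Sum>ws\<in>listset (A # As). f ws) = (\<Sum>(a, ws)\<in>A \<times> listset As. f (a # ws))"
    by (simp only: listset_Cons_eq_image sum.reindex) (simp add: comp_def case_prod_unfold)
  then show ?thesis
    by (simp add: sum.cartesian_product)
qed

lemma sum_listset_snoc:
  "(\<Sum>ws\<in>listset (As @ [A]). f ws) = (\<Sum>ws\<in>listset As. \<Sum>a\<in>A. f (ws @ [a]))"
  by (induction As arbitrary: f) (simp_all add: sum_listset_Cons del: listset.simps(2))

lemma tuples_eq_listset: "tuples G n = listset (replicate n (carrier G))"
  by (fastforce simp: tuples_def listset_iff_list_all2 list_all2_conv_all_nth in_set_conv_nth)

lemma sum_tuples_Suc:
  "(\<Sum>xs\<in>tuples G (Suc n). f xs) = (\<Sum>x\<in>carrier G. \<Sum>xs\<in>tuples G n. f (x # xs))"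
  by (simp add: tuples_eq_listset sum_listset_Cons del: listset.simps(2))

lemma finite_tuples: "finite (carrier G) \<Longrightarrow> finite (tuples G n)"
  by (auto simp: tuples_eq_listset intro!: finite_listset)

lemma card_filter_eq_sum: "finite A \<Longrightarrow> card {x \<in> A. P x} = (\<Sum>x\<in>A. of_bool (P x))"
  by (simp add: Collect_conj_eq Int_commute)

context group
begin

lemma mult_inv_cancel_left [simp]: "a \<in> carrier G \<Longrightarrow> x \<in> carrier G \<Longrightarrow> a \<otimes> (inv a \<otimes> x) = x"
  by (simp add: m_assoc[symmetric])

lemma inv_mult_cancel_left [simp]: "a \<in> carrier G \<Longrightarrow> x \<in> carrier G \<Longrightarrow> inv a \<otimes> (a \<otimes> x) = x"
  by (simp add: m_assoc[symmetric])

lemma gprod_closed [intro, simp]: "set xs \<subseteq> carrier G \<Longrightarrow> gprod G xs \<in> carrier G"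
  by (induction xs) auto

lemma gprod_append:
  "set xs \<subseteq> carrier G \<Longrightarrow> set ys \<subseteq> carrier G \<Longrightarrow> gprod G (xs @ ys) = gprod G xs \<otimes> gprod G ys"
  by (induction xs) (auto simp: m_assoc)

end

section \<open>Conjugation and conjugacy classes\<close>

definition conj_by :: "('a, 'b) monoid_scheme \<Rightarrow> 'a \<Rightarrow> 'a \<Rightarrow> 'a" where
  "conj_by G b x = inv\<^bsub>G\<^esub> b \<otimes>\<^bsub>G\<^esub> x \<otimes>\<^bsub>G\<^esub> b"

definition centralizer :: "('a, 'b) monoid_scheme \<Rightarrow> 'a \<Rightarrow> 'a set" where
  "centralizer G x = {b \<in> carrier G. conj_by G b x = x}"

context group
begin

lemma conj_by_closed [intro, simp]: "b \<in> carrier G \<Longrightarrow> x \<in> carrier G \<Longrightarrow> conj_by G b x \<in> carrier G"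
  by (simp add: conj_by_def)

lemma conj_by_one [simp]: "x \<in> carrier G \<Longrightarrow> conj_by G \<one> x = x"
  by (simp add: conj_by_def)

lemma conj_by_mult:
  "a \<in> carrier G \<Longrightarrow> b \<in> carrier G \<Longrightarrow> x \<in> carrier G \<Longrightarrow> conj_by G (a \<otimes> b) x = conj_by G b (conj_by G a x)"
  by (simp add: conj_by_def inv_mult_group m_assoc)

lemma conj_by_inv_conj_by [simp]:
  "h \<in> carrier G \<Longrightarrow> x \<in> carrier G \<Longrightarrow> conj_by G (inv h) (conj_by G h x) = x"
  by (simp add: conj_by_def m_assoc[symmetric]) (simp add: m_assoc)

lemma conj_by_conj_by_inv [simp]:
  "h \<in> carrier G \<Longrightarrow> x \<in> carrier G \<Longrightarrow> conj_by G h (conj_by G (inv h) x) = x"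
  by (simp add: conj_by_def m_assoc[symmetric]) (simp add: m_assoc)

lemma gprod_map_conj_by:
  "set ws \<subseteq> carrier G \<Longrightarrow> h \<in> carrier G \<Longrightarrow> gprod G (map (conj_by G h) ws) = conj_by G h (gprod G ws)"
  by (induction ws) (auto simp: conj_by_def m_assoc)

lemma set_map2_conj_by_subset:
  "set bs \<subseteq> carrier G \<Longrightarrow> set xs \<subseteq> carrier G \<Longrightarrow> set (map2 (conj_by G) bs xs) \<subseteq> carrier G"
  by (auto dest: set_zip_leftD set_zip_rightD)

lemma conj_class_eq_image: "conj_class G x = (\<lambda>b. conj_by G b x) ` carrier G"
  by (auto simp: conj_class_def conj_by_def)

lemma conj_class_subset_carrier: "x \<in> carrier G \<Longrightarrow> conj_class G x \<subseteq> carrier G"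
  by (auto simp: conj_class_eq_image)

lemma conj_class_self: "x \<in> carrier G \<Longrightarrow> x \<in> conj_class G x"
  by (auto simp: conj_class_eq_image intro!: image_eqI[where x = \<one>])

lemma conj_by_in_conj_class:
  assumes "x \<in> carrier G" "w \<in> conj_class G x" "h \<in> carrier G"
  shows "conj_by G h w \<in> conj_class G x"
proof -
  obtain b where "b \<in> carrier G" "w = conj_by G b x"
    using assms(2) by (auto simp: conj_class_eq_image)
  with assms show ?thesis
    by (auto simp: conj_class_eq_image conj_by_mult intro!: image_eqI[where x = "b \<otimes> h"])
qed

lemma conj_class_mono:
  assumes "x \<in> carrier G" "w \<in> conj_class G x"
  shows "conj_class G w \<subseteq> conj_class G x"
  using assms conj_class_subset_carrier[of x]
  by (auto simp: conj_class_eq_image[of w] intro!: conj_by_in_conj_class)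

lemma conj_class_eq:
  assumes x: "x \<in> carrier G" and w: "w \<in> conj_class G x"
  shows "conj_class G w = conj_class G x"
proof
  show "conj_class G w \<subseteq> conj_class G x"
    using conj_class_mono[OF x w] .
  obtain b where b: "b \<in> carrier G" "w = conj_by G b x"
    using w by (auto simp: conj_class_eq_image)
  then have "x \<in> conj_class G w"
    using x by (auto simp: conj_class_eq_image intro!: image_eqI[where x = "inv b"])
  then show "conj_class G x \<subseteq> conj_class G w"
    using b x by (intro conj_class_mono) auto
qed

lemma conj_classes_subset_carrier: "C \<in> conj_classes G \<Longrightarrow> C \<subseteq> carrier G"
  by (auto simp: conj_classes_def dest: conj_class_subset_carrier)

lemma conj_class_of_mem: "C \<in> conj_classes G \<Longrightarrow> w \<in> C \<Longrightarrow> conj_class G w = C"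
  unfolding conj_classes_def using conj_class_eq by blast

lemma some_in_conj_class: "C \<in> conj_classes G \<Longrightarrow> (SOME y. y \<in> C) \<in> C"
  by (auto simp: conj_classes_def intro: someI conj_class_self)

lemma conj_by_mem_conj_classes:
  "C \<in> conj_classes G \<Longrightarrow> w \<in> C \<Longrightarrow> h \<in> carrier G \<Longrightarrow> conj_by G h w \<in> C"
  by (auto simp: conj_classes_def intro: conj_by_in_conj_class)

lemma listset_subset_carrier:
  "\<forall>A\<in>set As. A \<subseteq> carrier G \<Longrightarrow> ws \<in> listset As \<Longrightarrow> set ws \<subseteq> carrier G"
  by (auto simp: listset_iff_list_all2 list_all2_conv_all_nth in_set_conv_nth)
     (metis nth_mem subsetD)

lemma map_conj_by_in_listset:
  "set As \<subseteq> conj_classes G \<Longrightarrow> h \<in> carrier G \<Longrightarrow> ws \<in> listset As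
    \<Longrightarrow> map (conj_by G h) ws \<in> listset As"
  by (auto simp: listset_iff_list_all2 list_all2_conv_all_nth)
     (metis conj_by_mem_conj_classes nth_mem subsetD)

end

section \<open>Reading a word in pairs\<close>

fun pair_word :: "('a, 'b) monoid_scheme \<Rightarrow> 'a list \<Rightarrow> 'a list \<Rightarrow> 'a list" where
  "pair_word G (y # ys) (u # us) = u # inv\<^bsub>G\<^esub> u \<otimes>\<^bsub>G\<^esub> y # pair_word G ys us"
| "pair_word G _ _ = []"

fun word_pairs :: "('a, 'b) monoid_scheme \<Rightarrow> 'a list \<Rightarrow> 'a list \<times> 'a list" where
  "word_pairs G (a # b # as) = map_prod ((#) (a \<otimes>\<^bsub>G\<^esub> b)) ((#) a) (word_pairs G as)"
| "word_pairs G _ = ([], [])"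

context group
begin

lemma set_pair_word_subset:
  "length ys = length us \<Longrightarrow> set ys \<subseteq> carrier G \<Longrightarrow> set us \<subseteq> carrier G
    \<Longrightarrow> set (pair_word G ys us) \<subseteq> carrier G"
  by (induction ys us rule: list_induct2) auto

lemma pair_word_in_tuples:
  "ys \<in> tuples G n \<Longrightarrow> us \<in> tuples G n
    \<Longrightarrow> pair_word G ys us \<in> tuples G (2 * n) \<and> word_pairs G (pair_word G ys us) = (ys, us)"
proof (induction n arbitrary: ys us)
  case (Suc n)
  then obtain y ys' u us' where "ys = y # ys'" "us = u # us'"
    by (auto simp: tuples_def length_Suc_conv)
  with Suc show ?case
    by (auto simp: tuples_def)
qed (simp add: tuples_def)

lemma word_pairs_in_tuples:
  "as \<in> tuples G (2 * n)
    \<Longrightarrow> word_pairs G as \<in> tuples G n \<times> tuples G n \<and> case_prod (pair_word G) (word_pairs G as) = as"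
proof (induction n arbitrary: as)
  case (Suc n)
  have "2 * Suc n = Suc (Suc (2 * n))"
    by simp
  with Suc.prems obtain a b as' where as: "as = a # b # as'" "as' \<in> tuples G (2 * n)"
    by (auto simp: tuples_def length_Suc_conv)
  obtain ys us where "word_pairs G as' = (ys, us)"
    by fastforce
  with as Suc.prems Suc.IH[OF as(2)] show ?case
    by (auto simp: tuples_def)
qed (simp add: tuples_def)

lemma bij_betw_pair_word:
  "bij_betw (case_prod (pair_word G)) (tuples G n \<times> tuples G n) (tuples G (2 * n))"
  by (rule bij_betw_byWitness[where f'="word_pairs G"])
     (auto dest: pair_word_in_tuples word_pairs_in_tuples)

lemma gprod_pair_word:
  "length ys = length us \<Longrightarrow> set ys \<subseteq> carrier G \<Longrightarrow> set us \<subseteq> carrier G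
    \<Longrightarrow> gprod G (pair_word G ys us) = gprod G ys"
  by (induction ys us rule: list_induct2) (auto simp: m_assoc)

lemma gprod_rev_pair_word:
  "length ys = length us \<Longrightarrow> set ys \<subseteq> carrier G \<Longrightarrow> set us \<subseteq> carrier G
    \<Longrightarrow> gprod G (rev (pair_word G ys us)) = gprod G (rev (map2 (conj_by G) us ys))"
proof (induction ys us rule: list_induct2)
  case (Cons y ys u us)
  then have "set (pair_word G ys us) \<subseteq> carrier G" "set (map2 (conj_by G) us ys) \<subseteq> carrier G"
    using set_pair_word_subset set_map2_conj_by_subset by auto
  with Cons show ?case
    by (simp add: gprod_append conj_by_def m_assoc)
qed simp

end

section \<open>Counting products of conjugates\<close>

definition prod_count :: "('a, 'b) monoid_scheme \<Rightarrow> 'a set list \<Rightarrow> 'a \<Rightarrow> nat" where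
  "prod_count G As g = card {ws \<in> listset As. gprod G ws = g}"

locale finite_group = group +
  assumes finite_carrier: "finite (carrier G)"
begin

lemma card_conjugators:
  assumes x: "x \<in> carrier G" and w: "w \<in> conj_class G x"
  shows "card {b \<in> carrier G. conj_by G b x = w} = card (centralizer G x)"
proof -
  obtain b0 where b0: "b0 \<in> carrier G" and w_eq: "w = conj_by G b0 x"
    using w by (auto simp: conj_class_eq_image)
  have "{b \<in> carrier G. conj_by G b x = w} = (\<lambda>c. c \<otimes> b0) ` centralizer G x"
  proof (intro equalityI subsetI)
    fix b assume b: "b \<in> {b \<in> carrier G. conj_by G b x = w}"
    then have "b \<otimes> inv b0 \<in> centralizer G x"
      using b0 x w_eq by (auto simp: centralizer_def conj_by_mult)
    moreover have "b = b \<otimes> inv b0 \<otimes> b0"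
      using b b0 by (simp add: m_assoc)
    ultimately show "b \<in> (\<lambda>c. c \<otimes> b0) ` centralizer G x"
      by blast
  qed (use b0 x w_eq in \<open>auto simp: centralizer_def conj_by_mult\<close>)
  moreover have "inj_on (\<lambda>c. c \<otimes> b0) (centralizer G x)"
    using b0 by (auto simp: inj_on_def centralizer_def)
  ultimately show ?thesis
    by (simp add: card_image)
qed

lemma sum_conj_by_eq_sum_conj_class:
  fixes f :: "'a \<Rightarrow> 'c :: comm_semiring_1"
  assumes x: "x \<in> carrier G"
  shows "(\<Sum>b\<in>carrier G. f (conj_by G b x)) = of_nat (card (centralizer G x)) * (\<Sum>w\<in>conj_class G x. f w)"
proof -
  have "(\<Sum>b\<in>carrier G. f (conj_by G b x))
      = (\<Sum>w\<in>conj_class G x. \<Sum>b\<in>{b \<in> carrier G. conj_by G b x = w}. f (conj_by G b x))"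
    unfolding conj_class_eq_image by (rule sum.image_gen[OF finite_carrier])
  also have "\<dots> = (\<Sum>w\<in>conj_class G x. of_nat (card (centralizer G x)) * f w)"
    by (intro sum.cong refl, subst sum.cong[OF refl, where h = "\<lambda>_. f w" for w])
       (auto simp: card_conjugators x)
  finally show ?thesis
    by (simp add: sum_distrib_left)
qed

lemma card_centralizer_mult_card_conj_class:
  "x \<in> carrier G \<Longrightarrow> card (centralizer G x) * card (conj_class G x) = card (carrier G)"
  using sum_conj_by_eq_sum_conj_class[of x "\<lambda>_. 1 :: nat"] by simp

lemma finite_listset_carrier: "\<forall>A\<in>set As. A \<subseteq> carrier G \<Longrightarrow> finite (listset As)"
  using finite_carrier by (auto intro: finite_listset finite_subset)

lemma prod_count_eq_sum:
  "\<forall>A\<in>set As. A \<subseteq> carrier G \<Longrightarrow> prod_count G As g = (\<Sum>ws\<in>listset As. of_bool (gprod G ws = g))"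
  by (simp add: prod_count_def card_filter_eq_sum finite_listset_carrier)

lemma prod_count_Cons:
  assumes "A \<subseteq> carrier G" "\<forall>B\<in>set As. B \<subseteq> carrier G" "g \<in> carrier G"
  shows "prod_count G (A # As) g = (\<Sum>a\<in>A. prod_count G As (inv a \<otimes> g))"
  using assms listset_subset_carrier[OF assms(2)]
  by (auto simp: prod_count_eq_sum sum_listset_Cons inv_solve_left eq_commute[of g]
      simp del: listset.simps(2) intro!: sum.cong)

lemma prod_count_snoc:
  assumes A: "A \<subseteq> carrier G" and As: "\<forall>B\<in>set As. B \<subseteq> carrier G" and g: "g \<in> carrier G"
  shows "prod_count G (As @ [A]) g = (\<Sum>a\<in>A. prod_count G As (g \<otimes> inv a))"
proof -
  have "prod_count G (As @ [A]) g = (\<Sum>ws\<in>listset As. \<Sum>a\<in>A. of_bool (gprod G (ws @ [a]) = g))"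
    using A As by (simp add: prod_count_eq_sum sum_listset_snoc)
  also have "\<dots> = (\<Sum>a\<in>A. \<Sum>ws\<in>listset As. of_bool (gprod G (ws @ [a]) = g))"
    by (rule sum.swap)
  also have "\<dots> = (\<Sum>a\<in>A. prod_count G As (g \<otimes> inv a))"
    using A As g listset_subset_carrier[OF As]
    by (auto simp: prod_count_eq_sum gprod_append inv_solve_right eq_commute[of g] intro!: sum.cong)
  finally show ?thesis .
qed

lemma prod_count_conj_by:
  assumes As: "set As \<subseteq> conj_classes G" and h: "h \<in> carrier G" and g: "g \<in> carrier G"
  shows "prod_count G As (conj_by G h g) = prod_count G As g"
proof -
  have carrier: "set ws \<subseteq> carrier G" if "ws \<in> listset As" for ws
    by (rule listset_subset_carrier[OF _ that]) (use As conj_classes_subset_carrier in blast)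
  have cancel: "map (conj_by G (inv h)) (map (conj_by G h) ws) = ws"
    "map (conj_by G h) (map (conj_by G (inv h)) ws) = ws" if "ws \<in> listset As" for ws
    using carrier[OF that] h by (auto intro!: map_idI)
  have "bij_betw (map (conj_by G (inv h)))
          {ws \<in> listset As. gprod G ws = conj_by G h g} {ws \<in> listset As. gprod G ws = g}"
    by (rule bij_betw_byWitness[where f' = "map (conj_by G h)"])
       (use As h g carrier cancel in \<open>auto simp: gprod_map_conj_by map_conj_by_in_listset\<close>)
  then show ?thesis
    unfolding prod_count_def by (rule bij_betw_same_card)
qed

text \<open>Moving the last factor to the front is a conjugation, which does not change the count.\<close>

lemma prod_count_rev:
  assumes "set As \<subseteq> conj_classes G" "g \<in> carrier G"
  shows "prod_count G (rev As) g = prod_count G As g"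
  using assms
proof (induction As arbitrary: g)
  case (Cons A As)
  have A: "A \<subseteq> carrier G" and As: "\<forall>B\<in>set As. B \<subseteq> carrier G"
    using Cons.prems conj_classes_subset_carrier by auto
  have "prod_count G (rev (A # As)) g = (\<Sum>a\<in>A. prod_count G (rev As) (g \<otimes> inv a))"
    using A As Cons.prems by (simp add: prod_count_snoc)
  also have "\<dots> = (\<Sum>a\<in>A. prod_count G As (g \<otimes> inv a))"
    using A Cons by (intro sum.cong refl Cons.IH) auto
  also have "\<dots> = (\<Sum>a\<in>A. prod_count G As (conj_by G a (g \<otimes> inv a)))"
    using A Cons.prems by (intro sum.cong refl prod_count_conj_by[symmetric]) auto
  also have "\<dots> = (\<Sum>a\<in>A. prod_count G As (inv a \<otimes> g))"
    using A Cons.prems by (intro sum.cong refl) (auto simp: conj_by_def m_assoc)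
  also have "\<dots> = prod_count G (A # As) g"
    using A As Cons.prems by (simp add: prod_count_Cons)
  finally show ?case .
qed simp

lemma card_conj_prod:
  assumes "set xs \<subseteq> carrier G" "g \<in> carrier G"
  shows "card {bs \<in> tuples G (length xs). gprod G (map2 (conj_by G) bs xs) = g}
       = (\<Prod>x\<leftarrow>xs. card (centralizer G x)) * prod_count G (map (conj_class G) xs) g"
  using assms
proof (induction xs arbitrary: g)
  case Nil
  then show ?case
    by (auto simp: tuples_def prod_count_def intro!: arg_cong[where f = card])
next
  case (Cons x xs)
  let ?count = "\<lambda>g. card {bs \<in> tuples G (length xs). gprod G (map2 (conj_by G) bs xs) = g}"
  let ?z = "\<Prod>x\<leftarrow>xs. card (centralizer G x)"
  have x: "x \<in> carrier G" and xs: "set xs \<subseteq> carrier G" and g: "g \<in> carrier G"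
    using Cons.prems by auto
  have classes: "\<forall>C\<in>set (map (conj_class G) xs). C \<subseteq> carrier G"
    using xs conj_class_subset_carrier by auto
  have map2_carrier: "set (map2 (conj_by G) bs xs) \<subseteq> carrier G" if "bs \<in> tuples G (length xs)" for bs
    using that xs by (intro set_map2_conj_by_subset) (auto simp: tuples_def)
  have "card {bs \<in> tuples G (length (x # xs)). gprod G (map2 (conj_by G) bs (x # xs)) = g}
      = (\<Sum>b\<in>carrier G. \<Sum>bs\<in>tuples G (length xs).
           of_bool (conj_by G b x \<otimes> gprod G (map2 (conj_by G) bs xs) = g))"
    by (simp add: card_filter_eq_sum finite_tuples finite_carrier sum_tuples_Suc)
  also have "\<dots> = (\<Sum>b\<in>carrier G. ?count (inv (conj_by G b x) \<otimes> g))"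
    using x g map2_carrier
    by (auto simp: card_filter_eq_sum finite_tuples finite_carrier inv_solve_left eq_commute[of g]
        intro!: sum.cong)
  also have "\<dots> = (\<Sum>b\<in>carrier G. ?z * prod_count G (map (conj_class G) xs) (inv (conj_by G b x) \<otimes> g))"
    using x g by (intro sum.cong refl Cons.IH xs) auto
  also have "\<dots> = card (centralizer G x) * (\<Sum>w\<in>conj_class G x. ?z * prod_count G (map (conj_class G) xs) (inv w \<otimes> g))"
    using sum_conj_by_eq_sum_conj_class[OF x, of "\<lambda>w. ?z * prod_count G (map (conj_class G) xs) (inv w \<otimes> g)"] by simp
  also have "\<dots> = card (centralizer G x) * ?z * prod_count G (map (conj_class G) (x # xs)) g"
    using x g classes conj_class_subset_carrier[OF x]
    by (simp add: prod_count_Cons sum_distrib_left mult.assoc)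
  finally show ?case
    by simp
qed

lemma card_conj_prod_rev:
  assumes xs: "set xs \<subseteq> carrier G" and g: "g \<in> carrier G"
  shows "card {bs \<in> tuples G (length xs). gprod G (rev (map2 (conj_by G) bs xs)) = g}
       = card {bs \<in> tuples G (length xs). gprod G (map2 (conj_by G) bs xs) = g}"
proof -
  have rev_map2: "rev (map2 (conj_by G) bs xs) = map2 (conj_by G) (rev bs) (rev xs)"
    if "length bs = length xs" for bs
    using that by (simp add: zip_rev rev_map)
  have "{bs \<in> tuples G (length xs). gprod G (rev (map2 (conj_by G) bs xs)) = g}
      = rev ` {bs \<in> tuples G (length (rev xs)). gprod G (map2 (conj_by G) bs (rev xs)) = g}"
  proof (intro equalityI subsetI)
    fix bs assume "bs \<in> {bs \<in> tuples G (length xs). gprod G (rev (map2 (conj_by G) bs xs)) = g}"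
    then show "bs \<in> rev ` {bs \<in> tuples G (length (rev xs)). gprod G (map2 (conj_by G) bs (rev xs)) = g}"
      by (auto simp: tuples_def rev_map2 intro!: image_eqI[where x = "rev bs"])
  qed (auto simp: tuples_def rev_map2)
  then have "card {bs \<in> tuples G (length xs). gprod G (rev (map2 (conj_by G) bs xs)) = g}
      = card {bs \<in> tuples G (length (rev xs)). gprod G (map2 (conj_by G) bs (rev xs)) = g}"
    by (simp add: card_image)
  also have "\<dots> = (\<Prod>x\<leftarrow>xs. card (centralizer G x)) * prod_count G (rev (map (conj_class G) xs)) g"
    using xs g card_conj_prod[of "rev xs" g] by (simp add: rev_map[symmetric])
  also have "\<dots> = (\<Prod>x\<leftarrow>xs. card (centralizer G x)) * prod_count G (map (conj_class G) xs) g"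
    using xs g by (subst prod_count_rev) (auto simp: conj_classes_def)
  also have "\<dots> = card {bs \<in> tuples G (length xs). gprod G (map2 (conj_by G) bs xs) = g}"
    using xs g by (simp add: card_conj_prod)
  finally show ?thesis .
qed

lemma card_rev_prod_eq_sum_rev_conj_prod:
  "card {as \<in> tuples G (2 * n). gprod G (rev as) = gprod G as}
   = (\<Sum>xs\<in>tuples G n. card {bs \<in> tuples G n. gprod G (rev (map2 (conj_by G) bs xs)) = gprod G xs})"
proof -
  have "card {as \<in> tuples G (2 * n). gprod G (rev as) = gprod G as}
      = (\<Sum>as\<in>tuples G (2 * n). of_bool (gprod G (rev as) = gprod G as))"
    by (simp add: card_filter_eq_sum finite_tuples finite_carrier)
  also have "\<dots> = (\<Sum>(xs, bs)\<in>tuples G n \<times> tuples G n.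
                      of_bool (gprod G (rev (pair_word G xs bs)) = gprod G (pair_word G xs bs)))"
    by (subst sum.reindex_bij_betw[OF bij_betw_pair_word, symmetric]) (simp add: case_prod_unfold)
  also have "\<dots> = (\<Sum>xs\<in>tuples G n. \<Sum>bs\<in>tuples G n.
                      of_bool (gprod G (rev (map2 (conj_by G) bs xs)) = gprod G xs))"
    by (auto simp: sum.cartesian_product tuples_def gprod_pair_word gprod_rev_pair_word intro!: sum.cong)
  finally show ?thesis
    by (simp add: card_filter_eq_sum finite_tuples finite_carrier)
qed

lemma card_stab_prod:
  assumes "set xs \<subseteq> carrier G"
  shows "card (stab_prod G xs)
       = (\<Prod>x\<leftarrow>xs. card (centralizer G x)) * prod_count G (map (conj_class G) xs) (gprod G xs)"
proof -
  have "stab_prod G xs = {bs \<in> tuples G (length xs). gprod G (map2 (conj_by G) bs xs) = gprod G xs}"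
    by (simp add: stab_prod_def conj_by_def[abs_def])
  with assms show ?thesis
    by (simp add: card_conj_prod)
qed

lemma card_rev_prod_eq_sum_stab_prod:
  "card {as \<in> tuples G (2 * n). gprod G (rev as) = gprod G as} = (\<Sum>xs\<in>tuples G n. card (stab_prod G xs))"
  unfolding card_rev_prod_eq_sum_rev_conj_prod
proof (intro sum.cong refl)
  fix xs assume "xs \<in> tuples G n"
  then have xs: "set xs \<subseteq> carrier G" and n: "n = length xs"
    by (auto simp: tuples_def)
  then show "card {bs \<in> tuples G n. gprod G (rev (map2 (conj_by G) bs xs)) = gprod G xs}
      = card (stab_prod G xs)"
    unfolding n by (simp add: card_conj_prod_rev card_stab_prod card_conj_prod)
qed

section \<open>Grouping by conjugacy classes\<close>

lemma map_conj_class_listset: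
  assumes "set Cs \<subseteq> conj_classes G" "xs \<in> listset Cs"
  shows "map (conj_class G) xs = Cs"
proof (rule nth_equalityI)
  show "length (map (conj_class G) xs) = length Cs"
    using assms(2) by (simp add: listset_iff_list_all2 list_all2_lengthD)
  fix i assume "i < length (map (conj_class G) xs)"
  with assms show "map (conj_class G) xs ! i = Cs ! i"
    by (simp add: listset_iff_list_all2 list_all2_conv_all_nth conj_class_of_mem subsetD)
qed

lemma tuples_with_classes_eq_listset:
  assumes Cs: "set Cs \<subseteq> conj_classes G" "length Cs = n"
  shows "{xs \<in> tuples G n. map (conj_class G) xs = Cs} = listset Cs"
proof (intro equalityI subsetI)
  fix xs assume "xs \<in> {xs \<in> tuples G n. map (conj_class G) xs = Cs}"
  then show "xs \<in> listset Cs"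
    by (auto simp: tuples_def listset_iff_list_all2 list_all2_conv_all_nth intro!: conj_class_self)
       (metis nth_mem subsetD)
next
  fix xs assume xs: "xs \<in> listset Cs"
  then have "set xs \<subseteq> carrier G"
    using Cs conj_classes_subset_carrier by (intro listset_subset_carrier) auto
  moreover have "length xs = length Cs"
    using xs by (simp add: listset_iff_list_all2 list_all2_lengthD)
  ultimately show "xs \<in> {xs \<in> tuples G n. map (conj_class G) xs = Cs}"
    using Cs map_conj_class_listset[OF Cs(1) xs] by (simp add: tuples_def)
qed

lemma map_conj_class_image_tuples:
  "map (conj_class G) ` tuples G n = {Cs. length Cs = n \<and> set Cs \<subseteq> conj_classes G}"
proof (intro equalityI subsetI)
  fix Cs assume Cs: "Cs \<in> {Cs. length Cs = n \<and> set Cs \<subseteq> conj_classes G}"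
  then have "map (\<lambda>C. SOME y. y \<in> C) Cs \<in> listset Cs"
    by (auto simp: listset_iff_list_all2 list_all2_conv_all_nth intro!: some_in_conj_class)
  with Cs have "map (\<lambda>C. SOME y. y \<in> C) Cs \<in> {xs \<in> tuples G n. map (conj_class G) xs = Cs}"
    by (simp add: tuples_with_classes_eq_listset)
  then show "Cs \<in> map (conj_class G) ` tuples G n"
    by (intro rev_image_eqI[where x = "map (\<lambda>C. SOME y. y \<in> C) Cs"]) auto
next
  fix Cs assume "Cs \<in> map (conj_class G) ` tuples G n"
  then obtain xs where "xs \<in> tuples G n" "Cs = map (conj_class G) xs"
    by blast
  then show "Cs \<in> {Cs. length Cs = n \<and> set Cs \<subseteq> conj_classes G}"
    by (auto simp: tuples_def conj_classes_def)
qed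

lemma sum_tuples_by_conj_classes:
  "(\<Sum>xs\<in>tuples G n. f xs) = (\<Sum>Cs\<in>{Cs. length Cs = n \<and> set Cs \<subseteq> conj_classes G}. \<Sum>xs\<in>listset Cs. f xs)"
proof -
  have "(\<Sum>xs\<in>tuples G n. f xs)
      = (\<Sum>Cs\<in>map (conj_class G) ` tuples G n. \<Sum>xs\<in>{xs \<in> tuples G n. map (conj_class G) xs = Cs}. f xs)"
    by (rule sum.image_gen[OF finite_tuples[OF finite_carrier]])
  then show ?thesis
    by (simp add: map_conj_class_image_tuples tuples_with_classes_eq_listset)
qed

lemma sum_prod_count_listset_eq_sum_squares:
  assumes Cs: "set Cs \<subseteq> conj_classes G"
  shows "(\<Sum>xs\<in>listset Cs. prod_count G Cs (gprod G xs)) = (\<Sum>g\<in>carrier G. prod_count G Cs g ^ 2)"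
proof -
  have classes: "\<forall>C\<in>set Cs. C \<subseteq> carrier G"
    using Cs conj_classes_subset_carrier by auto
  have "(\<Sum>xs\<in>listset Cs. prod_count G Cs (gprod G xs))
      = (\<Sum>xs\<in>listset Cs. \<Sum>g\<in>carrier G. prod_count G Cs g * of_bool (gprod G xs = g))"
    using listset_subset_carrier[OF classes] by (intro sum.cong refl) (simp add: finite_carrier)
  also have "\<dots> = (\<Sum>g\<in>carrier G. prod_count G Cs g * prod_count G Cs g)"
    by (subst sum.swap) (simp add: prod_count_eq_sum[OF classes] sum_distrib_left)
  finally show ?thesis
    by (simp add: power2_eq_square)
qed

lemma sum_class_function:
  fixes f :: "'a \<Rightarrow> 'c :: comm_semiring_1"
  assumes f: "\<And>g h. g \<in> carrier G \<Longrightarrow> h \<in> carrier G \<Longrightarrow> f (conj_by G h g) = f g"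
  shows "(\<Sum>g\<in>carrier G. f g) = (\<Sum>C\<in>conj_classes G. of_nat (card C) * f (SOME y. y \<in> C))"
proof -
  have "(\<Sum>g\<in>carrier G. f g) = (\<Sum>C\<in>conj_classes G. \<Sum>g\<in>{g \<in> carrier G. conj_class G g = C}. f g)"
    unfolding conj_classes_def by (rule sum.image_gen[OF finite_carrier])
  also have "\<dots> = (\<Sum>C\<in>conj_classes G. \<Sum>g\<in>C. f (SOME y. y \<in> C))"
  proof (intro sum.cong)
    fix C assume C: "C \<in> conj_classes G"
    show "{g \<in> carrier G. conj_class G g = C} = C"
      using C conj_class_of_mem conj_classes_subset_carrier by (auto dest: conj_class_self)
    fix g assume g: "g \<in> C"
    define y where "y = (SOME y. y \<in> C)"
    have "y \<in> C"
      unfolding y_def using C by (rule some_in_conj_class)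
    then have y: "y \<in> carrier G" "C = conj_class G y"
      using C conj_class_of_mem conj_classes_subset_carrier by auto
    with g obtain h where "h \<in> carrier G" "g = conj_by G h y"
      by (auto simp: conj_class_eq_image)
    with y(1) have "f g = f y"
      by (simp add: f)
    then show "f g = f (SOME y. y \<in> C)"
      by (simp add: y_def)
  qed simp
  finally show ?thesis
    by simp
qed

lemma class_mult_eq_prod_count: "class_mult G Cs C = prod_count G Cs (SOME y. y \<in> C)"
  unfolding class_mult_def prod_count_def listset_iff_list_all2 list_all2_conv_all_nth
  by (auto intro!: arg_cong[where f = card])

lemma real_prod_card_centralizer:
  assumes "set Cs \<subseteq> conj_classes G" "xs \<in> listset Cs"
  shows "real (\<Prod>x\<leftarrow>xs. card (centralizer G x))
       = real (card (carrier G)) ^ length Cs / (\<Prod>t<length Cs. real (card (Cs ! t)))"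
  using assms
proof (induction Cs arbitrary: xs)
  case (Cons C Cs)
  from Cons.prems(2) obtain x xs' where xs: "xs = x # xs'" "x \<in> C" "xs' \<in> listset Cs"
    unfolding listset_iff_list_all2 by (auto simp: list_all2_Cons2)
  have C: "C \<in> conj_classes G"
    using Cons.prems by simp
  then have "x \<in> carrier G" "conj_class G x = C"
    using xs conj_classes_subset_carrier conj_class_of_mem by auto
  then have "card (centralizer G x) * card C = card (carrier G)"
    using card_centralizer_mult_card_conj_class by blast
  moreover have "finite C"
    using C conj_classes_subset_carrier finite_carrier finite_subset by blast
  with xs(2) have "card C > 0"
    by (auto simp: card_gt_0_iff)
  ultimately have "real (card (centralizer G x)) = real (card (carrier G)) / real (card C)"
    by (simp add: field_simps flip: of_nat_mult)
  moreover have "real (\<Prod>x\<leftarrow>xs'. card (centralizer G x))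
      = real (card (carrier G)) ^ length Cs / (\<Prod>t<length Cs. real (card (Cs ! t)))"
    using Cons xs by simp
  moreover have "(\<Prod>t<length (C # Cs). real (card ((C # Cs) ! t)))
      = real (card C) * (\<Prod>t<length Cs. real (card (Cs ! t)))"
    by (simp add: prod.lessThan_Suc_shift del: prod.lessThan_Suc)
  ultimately show ?case
    using xs(1) by (simp only: times_divide_times_eq power_Suc list.map prod_list.Cons of_nat_mult
        length_Cons)
qed simp

lemma sum_prod_count_listset_eq_class_mult:
  assumes Cs: "set Cs \<subseteq> conj_classes G"
  shows "(\<Sum>xs\<in>listset Cs. prod_count G Cs (gprod G xs))
       = (\<Sum>C\<in>conj_classes G. card C * class_mult G Cs C ^ 2)"
proof -
  have "(\<Sum>g\<in>carrier G. prod_count G Cs g ^ 2)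
      = (\<Sum>C\<in>conj_classes G. card C * prod_count G Cs (SOME y. y \<in> C) ^ 2)"
    using Cs sum_class_function[of "\<lambda>g. prod_count G Cs g ^ 2"] by (simp add: prod_count_conj_by)
  then show ?thesis
    using Cs by (simp add: sum_prod_count_listset_eq_sum_squares class_mult_eq_prod_count)
qed

lemma sum_card_stab_prod_by_classes:
  "real (\<Sum>xs\<in>tuples G n. card (stab_prod G xs))
   = (\<Sum>Cs\<in>{Cs. length Cs = n \<and> set Cs \<subseteq> conj_classes G}.
        real (card (carrier G)) ^ n / (\<Prod>t<n. real (card (Cs ! t)))
        * (\<Sum>C\<in>conj_classes G. real (card C) * real (class_mult G Cs C) ^ 2))"
proof -
  let ?classes = "{Cs. length Cs = n \<and> set Cs \<subseteq> conj_classes G}"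
  have "real (\<Sum>xs\<in>tuples G n. card (stab_prod G xs))
      = (\<Sum>xs\<in>tuples G n. real (\<Prod>x\<leftarrow>xs. card (centralizer G x))
                               * real (prod_count G (map (conj_class G) xs) (gprod G xs)))"
    unfolding of_nat_sum by (intro sum.cong refl) (simp add: card_stab_prod tuples_def)
  also have "\<dots> = (\<Sum>Cs\<in>?classes. \<Sum>xs\<in>listset Cs. real (\<Prod>x\<leftarrow>xs. card (centralizer G x))
                               * real (prod_count G Cs (gprod G xs)))"
    unfolding sum_tuples_by_conj_classes by (intro sum.cong refl) (auto simp: map_conj_class_listset)
  also have "\<dots> = (\<Sum>Cs\<in>?classes. real (card (carrier G)) ^ n / (\<Prod>t<n. real (card (Cs ! t)))
                 * real (\<Sum>xs\<in>listset Cs. prod_count G Cs (gprod G xs)))"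
    unfolding of_nat_sum sum_distrib_left
    by (intro sum.cong refl) (auto simp: real_prod_card_centralizer)
  also have "\<dots> = (\<Sum>Cs\<in>?classes. real (card (carrier G)) ^ n / (\<Prod>t<n. real (card (Cs ! t)))
                 * (\<Sum>C\<in>conj_classes G. real (card C) * real (class_mult G Cs C) ^ 2))"
    by (intro sum.cong refl) (simp add: sum_prod_count_listset_eq_class_mult)
  finally show ?thesis .
qed

end

theorem mainTheorem11:
  fixes G (structure) and n :: nat
  assumes "group G" and "finite (carrier G)" and "n \<ge> 1"
  defines "P \<equiv> real (card {as \<in> tuples G (2*n). gprod G (rev as) = gprod G as})
                 / real (card (carrier G)) ^ (2*n)"
  shows "P = real (\<Sum>xs\<in>tuples G n. card (stab_prod G xs)) / real (card (carrier G)) ^ (2*n)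
       \<and> P = (\<Sum>Cs\<in>{Cs. length Cs = n \<and> set Cs \<subseteq> conj_classes G}. \<Sum>Om\<in>conj_classes G.
               real (card Om) * real (class_mult G Cs Om) ^ 2
               / ((\<Prod>t<n. real (card (Cs ! t))) * real (card (carrier G)) ^ n))"
proof -
  interpret finite_group G
    using assms(1,2) by (simp add: finite_group_def finite_group_axioms_def)
  let ?k = "real (card (carrier G))"
  have P: "P = real (\<Sum>xs\<in>tuples G n. card (stab_prod G xs)) / ?k ^ (2*n)"
    unfolding P_def card_rev_prod_eq_sum_stab_prod ..
  have "?k \<noteq> 0"
    using finite_carrier by (auto simp: card_eq_0_iff)
  then have "P = (\<Sum>Cs\<in>{Cs. length Cs = n \<and> set Cs \<subseteq> conj_classes G}. \<Sum>Om\<in>conj_classes G.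
               real (card Om) * real (class_mult G Cs Om) ^ 2
               / ((\<Prod>t<n. real (card (Cs ! t))) * ?k ^ n))"
    unfolding P sum_card_stab_prod_by_classes sum_divide_distrib sum_distrib_left
    by (intro sum.cong refl) (simp add: power_add mult_2)
  with P show ?thesis
    by blast
qed

end
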